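(* Let $H_0,H_1$ be complex Hilbert spaces, $G$ a densely defined closed operator from $H_0$ into $H_1$ and $D$ a densely defined closed operator from $H_1$ into $H_0$ with $-G^*\subset D$. If $u\in\mathrm{BD}(G)$, then $Gu\in\mathrm{BD}(D)$. If $q\in\mathrm{BD}(D)$, then $Dq\in\mathrm{BD}(G)$.
   Context: $\mathring D=-G^*$, $\mathring G=-D^*$. Domains carry graph inner products, e.g. $(u,v)_{\mathrm{dom}(G)}=(u,v)_{H_0}+(Gu,Gv)_{H_1}$. $\mathrm{BD}(G)$ is the orthogonal complement of $\mathrm{dom}(\mathring G)$ in $\mathrm{dom}(G)$ and $\mathrm{BD}(D)$ the orthogonal complement of $\mathrm{dom}(\mathring D)$ in $\mathrm{dom}(D)$. *)

theory Defs
  imports "HOL-Analysis.Analysis"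
begin

class complex_vector = ab_group_add +
  fixes scaleC :: "complex \<Rightarrow> 'a \<Rightarrow> 'a" (infixr \<open>*\<^sub>C\<close> 75)
  assumes scaleC_add_right: "a *\<^sub>C (x + y) = a *\<^sub>C x + a *\<^sub>C y"
    and scaleC_add_left: "(a + b) *\<^sub>C x = a *\<^sub>C x + b *\<^sub>C x"
    and scaleC_scaleC: "a *\<^sub>C (b *\<^sub>C x) = (a * b) *\<^sub>C x"
    and scaleC_one: "1 *\<^sub>C x = x"

text \<open>Complex inner product space; the inner product is linear in the first
  and conjugate-linear in the second argument.\<close>
class complex_inner = real_normed_vector + complex_vector +
  fixes cinner :: "'a \<Rightarrow> 'a \<Rightarrow> complex"
  assumes scaleR_scaleC: "scaleR r x = complex_of_real r *\<^sub>C x"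
    and cinner_add_left: "cinner (x + y) z = cinner x z + cinner y z"
    and cinner_scaleC_left: "cinner (c *\<^sub>C x) y = c * cinner x y"
    and cinner_commute: "cinner y x = cnj (cinner x y)"
    and cinner_nonneg: "0 \<le> Re (cinner x x)"
    and cinner_eq_zero_iff: "cinner x x = 0 \<longleftrightarrow> x = 0"
    and norm_eq_sqrt_cinner: "norm x = sqrt (Re (cinner x x))"

class chilbert_space = complex_inner + complete_space

section \<open>Operators given by a domain and an action on it\<close>

definition csubspace :: "'a::complex_vector set \<Rightarrow> bool" where
  "csubspace S \<longleftrightarrow> 0 \<in> S \<and> (\<forall>x\<in>S. \<forall>y\<in>S. x + y \<in> S) \<and> (\<forall>c. \<forall>x\<in>S. c *\<^sub>C x \<in> S)"

definition clinear_on :: "'a::complex_vector set \<Rightarrow> ('a \<Rightarrow> 'b::complex_vector) \<Rightarrow> bool" where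
  "clinear_on S f \<longleftrightarrow> (\<forall>x\<in>S. \<forall>y\<in>S. f (x + y) = f x + f y) \<and> (\<forall>c. \<forall>x\<in>S. f (c *\<^sub>C x) = c *\<^sub>C f x)"

definition op_graph :: "'a set \<Rightarrow> ('a \<Rightarrow> 'b) \<Rightarrow> ('a \<times> 'b) set" where
  "op_graph S f = {(x, f x) | x. x \<in> S}"

definition densely_defined_closed_op ::
  "'a::chilbert_space set \<Rightarrow> ('a \<Rightarrow> 'b::chilbert_space) \<Rightarrow> bool" where
  "densely_defined_closed_op S f \<longleftrightarrow>
     csubspace S \<and> clinear_on S f \<and> closure S = UNIV \<and> closed (op_graph S f)"

definition adj_dom :: "'a::complex_inner set \<Rightarrow> ('a \<Rightarrow> 'b::complex_inner) \<Rightarrow> 'b set" where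
  "adj_dom S f = {v. \<exists>w. \<forall>u\<in>S. cinner (f u) v = cinner u w}"

definition adj :: "'a::complex_inner set \<Rightarrow> ('a \<Rightarrow> 'b::complex_inner) \<Rightarrow> 'b \<Rightarrow> 'a" where
  "adj S f v = (SOME w. \<forall>u\<in>S. cinner (f u) v = cinner u w)"

definition op_subset :: "'a set \<Rightarrow> ('a \<Rightarrow> 'b) \<Rightarrow> 'a set \<Rightarrow> ('a \<Rightarrow> 'b) \<Rightarrow> bool" where
  "op_subset T g S f \<longleftrightarrow> T \<subseteq> S \<and> (\<forall>x\<in>T. g x = f x)"

definition graph_inner :: "('a::complex_inner \<Rightarrow> 'b::complex_inner) \<Rightarrow> 'a \<Rightarrow> 'a \<Rightarrow> complex" where
  "graph_inner f u v = cinner u v + cinner (f u) (f v)"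

text \<open>BD of the operator (SG, G) paired with (SD, D): the orthogonal complement,
  in dom(G) with the graph inner product, of dom(G-ring) = dom(-D*) = dom(D*).\<close>
definition BD :: "'a::complex_inner set \<Rightarrow> ('a \<Rightarrow> 'b::complex_inner) \<Rightarrow> 'b set \<Rightarrow> ('b \<Rightarrow> 'a) \<Rightarrow> 'a set" where
  "BD SG G SD D = {u \<in> SG. \<forall>v \<in> adj_dom SD D. graph_inner G u v = 0}"

end

theory Submission imports Defs begin

text \<open>The only analytic input is that a densely defined closed operator equals its
  double adjoint, proved by projecting onto its closed graph. Since \<open>-G\<^sup>* \<subseteq> D\<close> and \<open>G\<close> is
  closed, taking adjoints gives \<open>-D\<^sup>* \<subseteq> G\<close>. For \<open>u \<in> BD(G)\<close> the orthogonality condition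
  \<open>(u, v) + (Gu, Gv) = 0\<close> on \<open>dom(D\<^sup>*)\<close> then reads \<open>(D\<^sup>* v, Gu) = (v, u)\<close>, so
  \<open>Gu \<in> dom(D\<^sup>*\<^sup>*) = dom(D)\<close> and \<open>DGu = u\<close>; hence \<open>(Gu, w) + (DGu, Dw) = (Gu, w) - (u, G\<^sup>* w) = 0\<close>
  on \<open>dom(G\<^sup>*)\<close>, i.e. \<open>Gu \<in> BD(D)\<close>. The second claim is the same argument with the roles
  of \<open>G\<close> and \<open>D\<close> exchanged.\<close>

lemma cinner_zero_left [simp]: "cinner 0 (y::'a::complex_inner) = 0"
  using cinner_add_left[of "0::'a" 0 y] by simp

lemma cinner_minus_left: "cinner (- x) (y::'a::complex_inner) = - cinner x y"
  using cinner_add_left[of x "-x" y] by (simp add: eq_neg_iff_add_eq_0 add.commute)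

lemma cinner_diff_left: "cinner (x - z) (y::'a::complex_inner) = cinner x y - cinner z y"
  using cinner_add_left[of x "-z" y] by (simp add: cinner_minus_left)

lemma cinner_add_right: "cinner (x::'a::complex_inner) (y + z) = cinner x y + cinner x z"
  by (metis cinner_commute cinner_add_left complex_cnj_add)

lemma cinner_scaleC_right: "cinner (x::'a::complex_inner) (c *\<^sub>C y) = cnj c * cinner x y"
  by (metis cinner_commute cinner_scaleC_left complex_cnj_mult)

lemma cinner_zero_right [simp]: "cinner (x::'a::complex_inner) 0 = 0"
  by (metis cinner_commute cinner_zero_left complex_cnj_zero)

lemma cinner_minus_right: "cinner (x::'a::complex_inner) (- y) = - cinner x y"
  by (metis cinner_commute cinner_minus_left complex_cnj_minus)

lemma cinner_diff_right: "cinner (x::'a::complex_inner) (y - z) = cinner x y - cinner x z"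
  by (metis cinner_commute cinner_diff_left complex_cnj_diff)

lemma cinner_scaleR_right: "cinner (x::'a::complex_inner) (scaleR r y) = of_real r * cinner x y"
  by (simp add: scaleR_scaleC cinner_scaleC_right)

lemma cinner_self: "cinner (x::'a::complex_inner) x = complex_of_real (norm x ^ 2)"
proof (rule complex_eqI)
  have "Im (cinner x x) = - Im (cinner x x)"
    using arg_cong[OF cinner_commute[of x x], of Im] by simp
  then show "Im (cinner x x) = Im (complex_of_real (norm x ^ 2))" by simp
  show "Re (cinner x x) = Re (complex_of_real (norm x ^ 2))"
    using cinner_nonneg[of x] by (simp add: norm_eq_sqrt_cinner)
qed

lemma norm_add_sq:
  "norm (x + y::'a::complex_inner) ^ 2 = norm x ^ 2 + 2 * Re (cinner x y) + norm y ^ 2"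
proof -
  have "complex_of_real (norm (x + y) ^ 2) = cinner x x + cinner x y + cinner y x + cinner y y"
    by (simp only: cinner_self[symmetric] cinner_add_left cinner_add_right add.assoc add.left_commute)
  then have "norm (x + y) ^ 2 = Re (cinner x x + cinner x y + cinner y x + cinner y y)"
    by (metis Re_complex_of_real)
  moreover have "Re (cinner y x) = Re (cinner x y)"
    using cinner_commute[of y x] by simp
  ultimately show ?thesis by (simp add: cinner_self)
qed

lemma norm_diff_sq:
  "norm (x - y::'a::complex_inner) ^ 2 = norm x ^ 2 - 2 * Re (cinner x y) + norm y ^ 2"
  using norm_add_sq[of x "-y"] by (simp add: cinner_minus_right)

lemma parallelogram_law:
  "norm (x + y::'a::complex_inner) ^ 2 + norm (x - y) ^ 2 = 2 * norm x ^ 2 + 2 * norm y ^ 2"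
  by (simp add: norm_add_sq norm_diff_sq)

lemma csubspace_scaleR: "csubspace M \<Longrightarrow> (x::'a::complex_inner) \<in> M \<Longrightarrow> scaleR r x \<in> M"
  unfolding scaleR_scaleC csubspace_def by blast

lemma csubspace_add: "csubspace M \<Longrightarrow> x \<in> M \<Longrightarrow> y \<in> M \<Longrightarrow> x + y \<in> M"
  by (simp add: csubspace_def)

lemma csubspace_scaleC: "csubspace M \<Longrightarrow> x \<in> M \<Longrightarrow> c *\<^sub>C x \<in> M"
  by (simp add: csubspace_def)

lemma norm_diff_sq_le_of_midpoint:
  fixes x a b :: "'a::complex_inner"
  assumes "d \<le> norm (x - scaleR (1/2) (a + b)) ^ 2"
  shows "norm (a - b) ^ 2 \<le> 2 * norm (x - a) ^ 2 + 2 * norm (x - b) ^ 2 - 4 * d"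
proof -
  have "(x - a) + (x - b) = scaleR 2 (x - scaleR (1/2) (a + b))"
    by (simp add: algebra_simps scaleR_2)
  then have "norm ((x - a) + (x - b)) ^ 2 = 4 * norm (x - scaleR (1/2) (a + b)) ^ 2"
    by (simp add: power_mult_distrib)
  moreover have "(x - a) - (x - b) = b - a" by simp
  ultimately show ?thesis
    using assms parallelogram_law[of "x - a" "x - b"] norm_minus_commute[of a b] by simp
qed

lemma closed_csubspace_nearest_point:
  fixes M :: "'a::chilbert_space set"
  assumes sub: "csubspace M" and cl: "closed M"
  shows "\<exists>m\<in>M. \<forall>n\<in>M. norm (x - m) ^ 2 \<le> norm (x - n) ^ 2"
proof -
  define d where "d = Inf ((\<lambda>m. norm (x - m) ^ 2) ` M)"
  have "0 \<in> M" using sub by (simp add: csubspace_def)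
  have "bdd_below ((\<lambda>m. norm (x - m) ^ 2) ` M)" by (rule bdd_belowI[of _ 0]) auto
  then have d_le: "d \<le> norm (x - m) ^ 2" if "m \<in> M" for m
    unfolding d_def using that by (auto intro: cInf_lower)
  have "\<exists>m\<in>M. norm (x - m) ^ 2 < d + 1 / Suc k" for k
    using cInf_lessD[of "(\<lambda>m. norm (x - m) ^ 2) ` M" "d + 1 / Suc k"] \<open>0 \<in> M\<close>
    by (auto simp: d_def)
  then obtain ms where ms: "\<And>k. ms k \<in> M" "\<And>k. norm (x - ms k) ^ 2 < d + 1 / Suc k"
    by metis
  have close: "norm (ms i - ms j) ^ 2 < 2 / Suc i + 2 / Suc j" for i j
    using norm_diff_sq_le_of_midpoint[OF d_le, of "ms i" "ms j"] ms[of i] ms[of j]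
      csubspace_scaleR[OF sub csubspace_add[OF sub ms(1) ms(1)]]
    by fastforce
  have "Cauchy ms"
  proof (rule metric_CauchyI)
    fix e :: real assume "0 < e"
    obtain N :: nat where "4 / e ^ 2 < N" using reals_Archimedean2 by blast
    then have "4 / e ^ 2 < Suc N" by simp
    then have N: "4 / Suc N < e ^ 2" using \<open>0 < e\<close> by (simp add: field_simps)
    have "dist (ms i) (ms j) < e" if "N \<le> i" "N \<le> j" for i j
    proof -
      have "2 / Suc i \<le> 2 / Suc N" "2 / Suc j \<le> 2 / Suc N" using that by (auto simp: frac_le)
      then have "norm (ms i - ms j) ^ 2 < e ^ 2" using close[of i j] N by simp
      then show ?thesis using \<open>0 < e\<close> by (simp add: dist_norm power_less_imp_less_base)
    qed
    then show "\<exists>M. \<forall>m\<ge>M. \<forall>n\<ge>M. dist (ms m) (ms n) < e" by blast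
  qed
  then obtain m where lim: "ms \<longlonglongrightarrow> m" using Cauchy_convergent_iff convergent_def by blast
  have "m \<in> M" using closed_sequentially[OF cl] ms(1) lim by blast
  have "(\<lambda>k. norm (x - ms k) ^ 2) \<longlonglongrightarrow> norm (x - m) ^ 2" by (intro tendsto_intros lim)
  moreover have "(\<lambda>k. d + 1 / Suc k) \<longlonglongrightarrow> d"
    using tendsto_add[OF tendsto_const LIMSEQ_inverse_real_of_nat, of d]
    by (simp add: inverse_eq_divide)
  ultimately have "norm (x - m) ^ 2 \<le> d"
    by (rule LIMSEQ_le) (use ms(2) less_imp_le in blast)
  then show ?thesis using \<open>m \<in> M\<close> d_le by (meson order_trans)
qed

lemma Re_cinner_eq_0_if_nearest:
  fixes e n :: "'a::complex_inner"
  assumes "\<And>t. norm e ^ 2 \<le> norm (e - scaleR t n) ^ 2"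
  shows "Re (cinner e n) = 0"
proof (cases "n = 0")
  case False
  define r where "r = Re (cinner e n)"
  define N where "N = norm n ^ 2"
  have "N > 0" using False by (simp add: N_def)
  have "2 * t * r \<le> t ^ 2 * N" for t
    using assms[of t] by (simp add: norm_diff_sq cinner_scaleR_right power_mult_distrib r_def N_def)
  from this[of "r / N"] have "r ^ 2 \<le> 0"
    using \<open>N > 0\<close> by (simp add: field_simps power2_eq_square)
  then show ?thesis by (simp add: r_def)
qed simp

lemma nearest_point_orthogonal:
  fixes M :: "'a::complex_inner set"
  assumes sub: "csubspace M" and "m \<in> M"
    and nearest: "\<forall>n\<in>M. norm (x - m) ^ 2 \<le> norm (x - n) ^ 2"
  shows "\<forall>n\<in>M. cinner n (x - m) = 0"
proof
  fix n assume "n \<in> M"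
  have Re0: "Re (cinner (x - m) n') = 0" if "n' \<in> M" for n'
  proof (rule Re_cinner_eq_0_if_nearest)
    fix t
    have "m + scaleR t n' \<in> M"
      using sub \<open>m \<in> M\<close> that by (simp add: csubspace_add csubspace_scaleR)
    then show "norm (x - m) ^ 2 \<le> norm (x - m - scaleR t n') ^ 2"
      using nearest by (metis diff_diff_eq)
  qed
  have "Im (cinner (x - m) n) = 0"
    using Re0[OF csubspace_scaleC[OF sub \<open>n \<in> M\<close>, of \<i>]] by (simp add: cinner_scaleC_right)
  then have "cinner (x - m) n = 0" using Re0[OF \<open>n \<in> M\<close>] by (simp add: complex_eq_iff)
  then show "cinner n (x - m) = 0" by (metis cinner_commute complex_cnj_zero)
qed

instantiation prod :: (complex_vector, complex_vector) complex_vector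
begin

definition scaleC_prod :: "complex \<Rightarrow> 'a \<times> 'b \<Rightarrow> 'a \<times> 'b" where
  "scaleC_prod c x = (c *\<^sub>C fst x, c *\<^sub>C snd x)"

instance
  by standard (auto simp: scaleC_prod_def scaleC_add_right scaleC_add_left scaleC_scaleC scaleC_one)

end

instantiation prod :: (complex_inner, complex_inner) complex_inner
begin

definition cinner_prod :: "'a \<times> 'b \<Rightarrow> 'a \<times> 'b \<Rightarrow> complex" where
  "cinner_prod x y = cinner (fst x) (fst y) + cinner (snd x) (snd y)"

instance
proof
  fix r :: real and x y z :: "'a \<times> 'b" and c :: complex
  show "scaleR r x = complex_of_real r *\<^sub>C x"
    by (simp add: scaleR_prod_def scaleC_prod_def scaleR_scaleC)
  show "cinner (x + y) z = cinner x z + cinner y z"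
    by (simp add: cinner_prod_def cinner_add_left)
  show "cinner (c *\<^sub>C x) y = c * cinner x y"
    by (simp add: cinner_prod_def scaleC_prod_def cinner_scaleC_left distrib_left)
  show "cinner y x = cnj (cinner x y)"
    by (simp add: cinner_prod_def cinner_commute[of "fst y"] cinner_commute[of "snd y"])
  have self: "cinner x x = complex_of_real (norm (fst x) ^ 2 + norm (snd x) ^ 2)"
    by (simp add: cinner_prod_def cinner_self)
  show "0 \<le> Re (cinner x x)" unfolding self by simp
  show "cinner x x = 0 \<longleftrightarrow> x = 0"
    unfolding self of_real_eq_0_iff by (simp add: add_nonneg_eq_0_iff prod_eq_iff)
  show "norm x = sqrt (Re (cinner x x))" unfolding self by (simp add: norm_prod_def)
qed

end

instance prod :: (chilbert_space, chilbert_space) chilbert_space ..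

lemma csubspace_op_graph:
  assumes "csubspace S" "clinear_on S f"
  shows "csubspace (op_graph S f)"
proof -
  have "f 0 = 0"
    using assms unfolding csubspace_def clinear_on_def by (metis add_0 add_cancel_right_right)
  then show ?thesis
    using assms unfolding csubspace_def clinear_on_def op_graph_def
    by (auto simp: scaleC_prod_def zero_prod_def)
qed

lemma orthogonal_dense_eq_0:
  fixes w :: "'a::complex_inner"
  assumes dense: "closure S = UNIV" and orth: "\<forall>x\<in>S. cinner x w = 0"
  shows "w = 0"
proof -
  define g where "g x = (norm (x + w) ^ 2 - norm x ^ 2 - norm w ^ 2) / 2" for x
  have g: "g x = Re (cinner x w)" for x unfolding g_def by (simp add: norm_add_sq)
  have "continuous_on UNIV g" unfolding g_def by (auto intro!: continuous_intros)
  then have "closed {x. g x = 0}" by (simp add: closed_Collect_eq)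
  moreover have "S \<subseteq> {x. g x = 0}" using orth g by auto
  ultimately have "g w = 0" using dense closure_minimal by blast
  then show ?thesis using g cinner_self[of w] by simp
qed

lemma adj_eq:
  assumes "v \<in> adj_dom S f" "u \<in> S"
  shows "cinner (f u) v = cinner u (adj S f v)"
proof -
  have "\<exists>w. \<forall>u\<in>S. cinner (f u) v = cinner u w" using assms(1) by (simp add: adj_dom_def)
  from someI_ex[OF this] show ?thesis using assms(2) unfolding adj_def by blast
qed

lemma adj_dom_if_orthogonal_graph:
  fixes f :: "'a::complex_inner \<Rightarrow> 'b::complex_inner"
  assumes dense: "closure S = UNIV"
    and orth: "\<And>x. x \<in> S \<Longrightarrow> cinner x p + cinner (f x) r = 0"
  shows "r \<in> adj_dom S f" and "adj S f r = - p"
proof -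
  have eq: "cinner (f x) r = cinner x (- p)" if "x \<in> S" for x
    using orth[OF that] by (simp add: cinner_minus_right eq_neg_iff_add_eq_0 add.commute)
  then show r: "r \<in> adj_dom S f" unfolding adj_dom_def by blast
  have "\<forall>x\<in>S. cinner x (adj S f r + p) = 0"
    using eq adj_eq[OF r] by (simp add: cinner_add_right cinner_minus_right)
  then show "adj S f r = - p"
    using orthogonal_dense_eq_0[OF dense] by (simp add: eq_neg_iff_add_eq_0)
qed

lemma closed_op_eq_adj_adj:
  fixes S :: "'a::chilbert_space set" and f :: "'a \<Rightarrow> 'b::chilbert_space"
  assumes op: "densely_defined_closed_op S f"
    and H: "\<forall>v\<in>adj_dom S f. cinner (adj S f v) y = cinner v z"
  shows "y \<in> S \<and> f y = z"
proof -
  have sub: "csubspace S" and lin: "clinear_on S f" and dense: "closure S = UNIV"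
    and cl: "closed (op_graph S f)" using op unfolding densely_defined_closed_op_def by auto
  have graph: "csubspace (op_graph S f)" by (rule csubspace_op_graph[OF sub lin])
  obtain a where "a \<in> S"
    and nearest: "\<forall>n\<in>op_graph S f. norm ((y, z) - (a, f a)) ^ 2 \<le> norm ((y, z) - n) ^ 2"
    using closed_csubspace_nearest_point[OF graph cl, of "(y, z)"] by (auto simp: op_graph_def)
  have "(a, f a) \<in> op_graph S f" using \<open>a \<in> S\<close> by (auto simp: op_graph_def)
  define p where "p = y - a"
  define r where "r = z - f a"
  have "cinner x p + cinner (f x) r = 0" if "x \<in> S" for x
  proof -
    have "(x, f x) \<in> op_graph S f" using that by (auto simp: op_graph_def)
    then show ?thesis
      using nearest_point_orthogonal[OF graph \<open>(a, f a) \<in> op_graph S f\<close> nearest]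
      by (auto simp: cinner_prod_def p_def r_def)
  qed
  note r = adj_dom_if_orthogonal_graph[OF dense this]
  have "cinner (- p) a = cinner r (f a)"
    using adj_eq[OF r(1) \<open>a \<in> S\<close>] r(2) by (metis cinner_commute)
  moreover have "cinner (- p) y = cinner r z" using H r by auto
  ultimately have "cinner (- p) p = cinner r r"
    by (simp add: p_def r_def cinner_diff_right)
  then have "complex_of_real (- (norm p ^ 2)) = complex_of_real (norm r ^ 2)"
    by (simp add: cinner_minus_left cinner_self)
  then have "- (norm p ^ 2) = norm r ^ 2" by (simp only: of_real_eq_iff)
  then have "p = 0" "r = 0" by (smt (verit) zero_le_power2 norm_eq_zero power_eq_0_iff)+
  then show ?thesis using \<open>a \<in> S\<close> by (simp add: p_def r_def)
qed

lemma op_subset_minus_adj_swap: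
  assumes G: "densely_defined_closed_op SG G"
    and GD: "op_subset (adj_dom SG G) (\<lambda>v. - adj SG G v) SD D"
  shows "op_subset (adj_dom SD D) (\<lambda>v. - adj SD D v) SG G"
  unfolding op_subset_def
proof (intro conjI subsetI ballI)
  fix v assume v: "v \<in> adj_dom SD D"
  have "cinner (adj SG G w) v = cinner w (- adj SD D v)" if w: "w \<in> adj_dom SG G" for w
  proof -
    have "w \<in> SD" and Dw: "D w = - adj SG G w" using GD w by (auto simp: op_subset_def)
    have "cinner (adj SG G w) v = - cinner (D w) v" by (simp add: Dw cinner_minus_left)
    also have "\<dots> = cinner w (- adj SD D v)"
      using adj_eq[OF v \<open>w \<in> SD\<close>] by (simp add: cinner_minus_right)
    finally show ?thesis .
  qed
  then have "v \<in> SG \<and> G v = - adj SD D v" using closed_op_eq_adj_adj[OF G] by blast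
  then show "v \<in> SG" "- adj SD D v = G v" by auto
qed

lemma BD_in_dom_and_inverse:
  assumes D: "densely_defined_closed_op SD D"
    and DG: "op_subset (adj_dom SD D) (\<lambda>v. - adj SD D v) SG G"
    and u: "u \<in> BD SG G SD D"
  shows "G u \<in> SD \<and> D (G u) = u"
proof -
  have "cinner (adj SD D v) (G u) = cinner v u" if v: "v \<in> adj_dom SD D" for v
  proof -
    have "cinner u v + cinner (G u) (- adj SD D v) = 0"
      using u v DG by (auto simp: BD_def graph_inner_def op_subset_def)
    then show ?thesis by (metis cinner_commute cinner_minus_right add_eq_0_iff minus_minus)
  qed
  then show ?thesis using closed_op_eq_adj_adj[OF D] by blast
qed

lemma BD_image:
  assumes D: "densely_defined_closed_op SD D"
    and GD: "op_subset (adj_dom SG G) (\<lambda>v. - adj SG G v) SD D"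
    and DG: "op_subset (adj_dom SD D) (\<lambda>v. - adj SD D v) SG G"
    and u: "u \<in> BD SG G SD D"
  shows "G u \<in> BD SD D SG G"
proof -
  have Gu: "G u \<in> SD \<and> D (G u) = u" by (rule BD_in_dom_and_inverse[OF D DG u])
  have "cinner (G u) w + cinner (D (G u)) (D w) = 0" if w: "w \<in> adj_dom SG G" for w
  proof -
    have "u \<in> SG" using u by (simp add: BD_def)
    moreover have "D w = - adj SG G w" using GD w by (simp add: op_subset_def)
    ultimately show ?thesis using adj_eq[OF w] Gu by (simp add: cinner_minus_right)
  qed
  then show ?thesis using Gu by (simp add: BD_def graph_inner_def)
qed

theorem corollary2p6:
  fixes SG :: "'h0::chilbert_space set" and G :: "'h0 \<Rightarrow> 'h1::chilbert_space"
    and SD :: "'h1 set" and D :: "'h1 \<Rightarrow> 'h0"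
  assumes "densely_defined_closed_op SG G"
    and "densely_defined_closed_op SD D"
    and "op_subset (adj_dom SG G) (\<lambda>v. - adj SG G v) SD D"
  shows "(\<forall>u \<in> BD SG G SD D. G u \<in> BD SD D SG G) \<and> (\<forall>q \<in> BD SD D SG G. D q \<in> BD SG G SD D)"
proof -
  have DG: "op_subset (adj_dom SD D) (\<lambda>v. - adj SD D v) SG G"
    by (rule op_subset_minus_adj_swap[OF assms(1,3)])
  show ?thesis
    using BD_image[OF assms(2,3) DG] BD_image[OF assms(1) DG assms(3)] by blast
qed

end
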